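(* Let $G$ be a strongly connected directed co-graph with co-tree $T$ and let $\hat{w}$ be an inner node of $T$. Then there is no vertex $w\in V(G)\setminus V(G_{\hat{w}})$ that resolves two vertices of $V(G_{\hat{w}})$ in $G$.
   Context: All graphs are finite and simple. For vertices $u,v$ of a directed graph $G$, $d_G(u,v)$ is the length of a shortest directed path from $u$ to $v$ (undefined if none exists); $G$ is strongly connected if directed paths exist in both directions between any two vertices. A vertex $w$ resolves two distinct vertices $u,v$ in $G$ if $w=u$, or $w=v$, or there are paths from $w$ to $u$ and from $w$ to $v$ with $d_G(w,u)\neq d_G(w,v)$. Directed co-graphs and their co-trees are defined recursively: a single vertex $u$ is a directed co-graph whose co-tree is a single node (a leaf) associated with $u$. If $G_1,G_2$ are directed co-graphs on disjoint vertex sets with co-trees $T_1,T_2$ (roots $\hat{l},\hat{r}$), then the disjoint union $G_1\cup G_2$ (edge set $E(G_1)\cup E(G_2)$), the join $G_1\times G_2$ (additionally all edges $(u,v),(v,u)$ with $u\in V(G_1),v\in V(G_2)$) and the directed join $G_1\gg G_2$ (additionally all edges $(u,v)$ with $u\in V(G_1),v\in V(G_2)$), each on vertex set $V(G_1)\cup V(G_2)$, are directed co-graphs; the co-tree is obtained from $T_1,T_2$ by adding a new root labelled $\cup$, $\times$ or $\gg$ respectively, with left successor $\hat{l}$ and right successor $\hat{r}$. Non-leaf nodes are inner nodes. For a node $\hat{w}$ of $T$, $G_{\hat{w}}$ denotes the subgraph of $G$ induced by the vertices associated with the leaves of the subtree of $T$ rooted at $\hat{w}$. *)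

theory Defs
  imports Main
begin

text \<open>Co-trees of directed co-graphs: leaves carry vertices, inner nodes are labelled
  by disjoint union, join, or directed join (left successor first).\<close>
datatype 'a cotree =
    Leaf 'a
  | CUnion "'a cotree" "'a cotree"
  | CJoin "'a cotree" "'a cotree"
  | CDJoin "'a cotree" "'a cotree"

fun leaves :: "'a cotree \<Rightarrow> 'a list" where
  "leaves (Leaf u) = [u]"
| "leaves (CUnion l r) = leaves l @ leaves r"
| "leaves (CJoin l r) = leaves l @ leaves r"
| "leaves (CDJoin l r) = leaves l @ leaves r"

definition verts :: "'a cotree \<Rightarrow> 'a set" where
  "verts T = set (leaves T)"

text \<open>Well-formed co-tree: the vertex sets combined at each node are disjoint.\<close>
definition wf_cotree :: "'a cotree \<Rightarrow> bool" where
  "wf_cotree T \<longleftrightarrow> distinct (leaves T)"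

fun edges :: "'a cotree \<Rightarrow> ('a \<times> 'a) set" where
  "edges (Leaf u) = {}"
| "edges (CUnion l r) = edges l \<union> edges r"
| "edges (CJoin l r) = edges l \<union> edges r \<union> (verts l \<times> verts r) \<union> (verts r \<times> verts l)"
| "edges (CDJoin l r) = edges l \<union> edges r \<union> (verts l \<times> verts r)"

fun subtrees :: "'a cotree \<Rightarrow> 'a cotree set" where
  "subtrees (Leaf u) = {Leaf u}"
| "subtrees (CUnion l r) = insert (CUnion l r) (subtrees l \<union> subtrees r)"
| "subtrees (CJoin l r) = insert (CJoin l r) (subtrees l \<union> subtrees r)"
| "subtrees (CDJoin l r) = insert (CDJoin l r) (subtrees l \<union> subtrees r)"

definition inner_node :: "'a cotree \<Rightarrow> bool" where
  "inner_node t \<longleftrightarrow> (\<forall>u. t \<noteq> Leaf u)"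

definition strongly_connected :: "'a set \<Rightarrow> ('a \<times> 'a) set \<Rightarrow> bool" where
  "strongly_connected V E \<longleftrightarrow> (\<forall>u\<in>V. \<forall>v\<in>V. (u, v) \<in> E\<^sup>*)"

definition dist :: "('a \<times> 'a) set \<Rightarrow> 'a \<Rightarrow> 'a \<Rightarrow> nat" where
  "dist E u v = (LEAST n. (u, v) \<in> E ^^ n)"

definition resolves :: "('a \<times> 'a) set \<Rightarrow> 'a \<Rightarrow> 'a \<Rightarrow> 'a \<Rightarrow> bool" where
  "resolves E w u v \<longleftrightarrow> w = u \<or> w = v \<or>
     ((w, u) \<in> E\<^sup>* \<and> (w, v) \<in> E\<^sup>* \<and> dist E w u \<noteq> dist E w v)"

end

theory Submission
  imports Defs
begin

text \<open>The vertex set of a subtree of a co-tree is a module of the co-graph: edges between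
  different parts of the tree are only ever added as complete products of vertex sets, so a vertex
  outside the subtree has an edge to all of its vertices or to none. Hence a walk from an outside
  vertex w into the module can be redirected, at its first entry, to any other vertex of the module,
  and all module vertices reachable from w lie at the same distance from w.\<close>

text \<open>Co-graph modules are also uniform for edges leaving M; distances from outside only need the
  entering edges.\<close>
definition in_module :: "('a \<times> 'a) set \<Rightarrow> 'a set \<Rightarrow> bool" where
  "in_module E M \<longleftrightarrow> (\<forall>x y y'. x \<notin> M \<longrightarrow> y \<in> M \<longrightarrow> y' \<in> M \<longrightarrow> (x, y) \<in> E \<longrightarrow> (x, y') \<in> E)"

lemma in_module_Un: "in_module E M \<Longrightarrow> in_module E' M \<Longrightarrow> in_module (E \<union> E') M"
  unfolding in_module_def by blast

lemma in_module_Times: "M \<subseteq> B \<or> M \<inter> B = {} \<Longrightarrow> in_module (A \<times> B) M"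
  unfolding in_module_def by blast

lemma in_module_if_subset_Times: "E \<subseteq> X \<times> X \<Longrightarrow> X \<subseteq> M \<or> M \<inter> X = {} \<Longrightarrow> in_module E M"
  unfolding in_module_def by blast

lemma edges_subset_verts: "edges t \<subseteq> verts t \<times> verts t"
  by (induction t) (auto simp: verts_def)

lemma verts_subtrees_subset: "t' \<in> subtrees t \<Longrightarrow> verts t' \<subseteq> verts t"
  by (induction t) (auto simp: verts_def)

lemma in_module_child_subtree:
  assumes "verts l \<inter> verts r = {}" "t \<in> subtrees l \<union> subtrees r"
    and "t \<in> subtrees l \<Longrightarrow> in_module (edges l) (verts t)"
    and "t \<in> subtrees r \<Longrightarrow> in_module (edges r) (verts t)"
  shows "in_module (edges l \<union> edges r) (verts t)"
    and "in_module (A \<times> verts l) (verts t)" "in_module (A \<times> verts r) (verts t)"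
proof -
  have sibling: "in_module (edges r') (verts t)" "in_module (A \<times> verts l') (verts t)"
    "in_module (A \<times> verts r') (verts t)"
    if "t \<in> subtrees l'" "verts l' \<inter> verts r' = {}" for l' r'
  proof -
    have "verts t \<subseteq> verts l'" "verts t \<inter> verts r' = {}"
      using verts_subtrees_subset[OF that(1)] that(2) by blast+
    then show "in_module (edges r') (verts t)" "in_module (A \<times> verts l') (verts t)"
      "in_module (A \<times> verts r') (verts t)"
      using edges_subset_verts by (blast intro: in_module_if_subset_Times in_module_Times)+
  qed
  from assms(2) show "in_module (edges l \<union> edges r) (verts t)"
    "in_module (A \<times> verts l) (verts t)" "in_module (A \<times> verts r) (verts t)"
    using sibling[of l r] sibling[of r l] assms(1,3,4)
    by (auto simp: Int_commute intro: in_module_Un)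
qed

lemma in_module_verts_subtree:
  assumes "wf_cotree T" "t \<in> subtrees T"
  shows "in_module (edges T) (verts t)"
  using assms
proof (induction T)
  case (Leaf u)
  then show ?case by (simp add: in_module_def)
next
  case (CUnion l r)
  then have wf: "wf_cotree l" "wf_cotree r" and disj: "verts l \<inter> verts r = {}"
    by (auto simp: wf_cotree_def verts_def)
  show ?case
  proof (cases "t = CUnion l r")
    case False
    with CUnion.prems have "t \<in> subtrees l \<union> subtrees r" by auto
    from in_module_child_subtree[OF disj this CUnion.IH(1)[OF wf(1)] CUnion.IH(2)[OF wf(2)]]
    show ?thesis by (simp add: in_module_Un)
  qed (use edges_subset_verts in \<open>blast intro: in_module_if_subset_Times\<close>)
next
  case (CJoin l r)
  then have wf: "wf_cotree l" "wf_cotree r" and disj: "verts l \<inter> verts r = {}"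
    by (auto simp: wf_cotree_def verts_def)
  show ?case
  proof (cases "t = CJoin l r")
    case False
    with CJoin.prems have "t \<in> subtrees l \<union> subtrees r" by auto
    from in_module_child_subtree[OF disj this CJoin.IH(1)[OF wf(1)] CJoin.IH(2)[OF wf(2)]]
    show ?thesis by (simp add: in_module_Un)
  qed (use edges_subset_verts in \<open>blast intro: in_module_if_subset_Times\<close>)
next
  case (CDJoin l r)
  then have wf: "wf_cotree l" "wf_cotree r" and disj: "verts l \<inter> verts r = {}"
    by (auto simp: wf_cotree_def verts_def)
  show ?case
  proof (cases "t = CDJoin l r")
    case False
    with CDJoin.prems have "t \<in> subtrees l \<union> subtrees r" by auto
    from in_module_child_subtree[OF disj this CDJoin.IH(1)[OF wf(1)] CDJoin.IH(2)[OF wf(2)]]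
    show ?thesis by (simp add: in_module_Un)
  qed (use edges_subset_verts in \<open>blast intro: in_module_if_subset_Times\<close>)
qed

lemma in_module_relpow_redirect:
  assumes "in_module E M" "(w, u) \<in> E ^^ n" "w \<notin> M" "u \<in> M" "v \<in> M"
  shows "\<exists>m\<le>n. (w, v) \<in> E ^^ m"
  using assms(2,3)
proof (induction n arbitrary: w)
  case 0
  then show ?case using assms(4) by auto
next
  case (Suc n)
  then obtain y where y: "(w, y) \<in> E" "(y, u) \<in> E ^^ n" by (meson relpow_Suc_D2)
  show ?case
  proof (cases "y \<in> M")
    case True
    with assms(1,5) Suc.prems(2) y(1) have "(w, v) \<in> E" unfolding in_module_def by blast
    then have "(w, v) \<in> E ^^ 1" by simp
    then show ?thesis by (intro exI[of _ 1]) simp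
  next
    case False
    with Suc.IH[OF y(2)] obtain m where "m \<le> n" "(y, v) \<in> E ^^ m" by blast
    with y(1) have "(w, v) \<in> E ^^ Suc m" by (meson relpow_Suc_I2)
    with \<open>m \<le> n\<close> show ?thesis by (intro exI[of _ "Suc m"]) simp
  qed
qed

lemma in_module_dist_le:
  assumes "in_module E M" "(w, u) \<in> E\<^sup>*" "w \<notin> M" "u \<in> M" "v \<in> M"
  shows "dist E w v \<le> dist E w u"
proof -
  from assms(2) obtain n where "(w, u) \<in> E ^^ n" by (blast dest: rtrancl_imp_relpow)
  then have "(w, u) \<in> E ^^ dist E w u" unfolding dist_def by (rule LeastI)
  from in_module_relpow_redirect[OF assms(1) this assms(3-5)]
  obtain m where "m \<le> dist E w u" "(w, v) \<in> E ^^ m" by blast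
  then show ?thesis unfolding dist_def by (meson Least_le le_trans)
qed

lemma in_module_not_resolves:
  assumes "in_module E M" "w \<notin> M" "u \<in> M" "v \<in> M"
  shows "\<not> resolves E w u v"
proof
  assume "resolves E w u v"
  with assms(2-4) have reach: "(w, u) \<in> E\<^sup>*" "(w, v) \<in> E\<^sup>*"
    and "dist E w u \<noteq> dist E w v"
    by (auto simp: resolves_def)
  moreover have "dist E w v \<le> dist E w u" "dist E w u \<le> dist E w v"
    using in_module_dist_le[OF assms(1) reach(1) assms(2-4)]
      in_module_dist_le[OF assms(1) reach(2) assms(2) assms(4,3)] by simp_all
  ultimately show False by simp
qed

theorem lemma1:
  fixes T :: "'a cotree" and wt :: "'a cotree"
  assumes "wf_cotree T"
    and "strongly_connected (verts T) (edges T)"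
    and "wt \<in> subtrees T"
    and "inner_node wt"
  shows "\<not> (\<exists>w \<in> verts T - verts wt. \<exists>u \<in> verts wt. \<exists>v \<in> verts wt.
             u \<noteq> v \<and> resolves (edges T) w u v)"
proof -
  have "in_module (edges T) (verts wt)"
    using assms(1,3) by (rule in_module_verts_subtree)
  then show ?thesis
    using in_module_not_resolves by (metis DiffD2)
qed

end
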